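(* Let $L$ be a Lie algebra over a field $K$ of characteristic different from $2$ and $3$. If $L$ possesses a nonzero commutative $2$-cocycle, then $L$ has a nonzero homomorphic image satisfying the standard identity of degree $5$: $$\sum_{\sigma\in S_4}\operatorname{sgn}(\sigma)\,[[[[y,x_{\sigma(1)}],x_{\sigma(2)}],x_{\sigma(3)}],x_{\sigma(4)}]=0\quad\text{for all } x_1,\dots,x_4,y.$$
   Context: A commutative $2$-cocycle on $L$ is a symmetric bilinear form $\varphi:L\times L\to K$ such that $\varphi([x,y],z)+\varphi([z,x],y)+\varphi([y,z],x)=0$ for all $x,y,z\in L$. *)

theory Defs
  imports Complex_Main "HOL-Combinatorics.Permutations"
begin

text \<open>A Lie algebra over a field 'k: the whole type 'a, with scalar multiplication
  scale and bracket br.\<close>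

definition lie_algebra :: "('k::field \<Rightarrow> 'a::ab_group_add \<Rightarrow> 'a) \<Rightarrow> ('a \<Rightarrow> 'a \<Rightarrow> 'a) \<Rightarrow> bool" where
  "lie_algebra scale br \<longleftrightarrow>
     vector_space scale \<and>
     (\<forall>x y z. br (x + y) z = br x z + br y z) \<and>
     (\<forall>x y z. br x (y + z) = br x y + br x z) \<and>
     (\<forall>c x y. br (scale c x) y = scale c (br x y)) \<and>
     (\<forall>c x y. br x (scale c y) = scale c (br x y)) \<and>
     (\<forall>x. br x x = 0) \<and>
     (\<forall>x y z. br x (br y z) + br y (br z x) + br z (br x y) = 0)"

definition bilinear_form :: "('k::field \<Rightarrow> 'a::ab_group_add \<Rightarrow> 'a) \<Rightarrow> ('a \<Rightarrow> 'a \<Rightarrow> 'k) \<Rightarrow> bool" where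
  "bilinear_form scale \<phi> \<longleftrightarrow>
     (\<forall>x y z. \<phi> (x + y) z = \<phi> x z + \<phi> y z) \<and>
     (\<forall>x y z. \<phi> x (y + z) = \<phi> x y + \<phi> x z) \<and>
     (\<forall>c x y. \<phi> (scale c x) y = c * \<phi> x y) \<and>
     (\<forall>c x y. \<phi> x (scale c y) = c * \<phi> x y)"

definition comm_2_cocycle :: "('k::field \<Rightarrow> 'a::ab_group_add \<Rightarrow> 'a) \<Rightarrow> ('a \<Rightarrow> 'a \<Rightarrow> 'a) \<Rightarrow> ('a \<Rightarrow> 'a \<Rightarrow> 'k) \<Rightarrow> bool" where
  "comm_2_cocycle scale br \<phi> \<longleftrightarrow>
     bilinear_form scale \<phi> \<and>
     (\<forall>x y. \<phi> x y = \<phi> y x) \<and>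
     (\<forall>x y z. \<phi> (br x y) z + \<phi> (br z x) y + \<phi> (br y z) x = 0)"

definition lie_ideal :: "('k::field \<Rightarrow> 'a::ab_group_add \<Rightarrow> 'a) \<Rightarrow> ('a \<Rightarrow> 'a \<Rightarrow> 'a) \<Rightarrow> 'a set \<Rightarrow> bool" where
  "lie_ideal scale br I \<longleftrightarrow>
     0 \<in> I \<and> (\<forall>x\<in>I. \<forall>y\<in>I. x + y \<in> I) \<and> (\<forall>c. \<forall>x\<in>I. scale c x \<in> I) \<and>
     (\<forall>x. \<forall>y\<in>I. br x y \<in> I)"

definition std5 :: "('k::field \<Rightarrow> 'a::ab_group_add \<Rightarrow> 'a) \<Rightarrow> ('a \<Rightarrow> 'a \<Rightarrow> 'a) \<Rightarrow> 'a \<Rightarrow> (nat \<Rightarrow> 'a) \<Rightarrow> 'a" where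
  "std5 scale br y x =
     (\<Sum>\<sigma> \<in> {\<sigma>. \<sigma> permutes {1..4::nat}}.
        scale (of_int (sign \<sigma>)) (br (br (br (br y (x (\<sigma> 1))) (x (\<sigma> 2))) (x (\<sigma> 3))) (x (\<sigma> 4))))"

text \<open>The quotient L/I satisfies the standard identity of degree 5 iff every value
  of the standard polynomial on L lies in I.\<close>
definition quotient_satisfies_std5 :: "('k::field \<Rightarrow> 'a::ab_group_add \<Rightarrow> 'a) \<Rightarrow> ('a \<Rightarrow> 'a \<Rightarrow> 'a) \<Rightarrow> 'a set \<Rightarrow> bool" where
  "quotient_satisfies_std5 scale br I \<longleftrightarrow> (\<forall>y x. std5 scale br y x \<in> I)"

end

theory Submission
  imports Defs
begin

text \<open>A commutative 2-cocycle \<phi> satisfies \<phi>([p,q],s) = \<phi>(p,[s,q]) - \<phi>(q,[s,p]). Feeding the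
  Jacobi identity into this relation shows, when 2 is invertible, that \<phi>(x,[t,[y,w]]) has
  vanishing cyclic sum in x, y, w. Three times \<phi>(z, s5(y,x1,...,x4)) is an integer combination
  of such cyclic sums, so when 3 is invertible as well, every value of the standard polynomial
  s5 lies in the kernel of \<phi>. As ad a acts on s5 as a derivation, all iterated brackets of
  these values lie in that kernel too, i.e.\ the values of s5 lie in the largest ideal I
  contained in the kernel of \<phi>. This ideal is proper since \<phi> \<noteq> 0, and L/I satisfies s5 = 0.\<close>

lemma two_and_three_neq_zero:
  assumes "CHAR('k::field) \<noteq> 2" and "CHAR('k) \<noteq> 3"
  shows "(2::'k) \<noteq> 0" and "(3::'k) \<noteq> 0"
proof -
  show two: "(2::'k) \<noteq> 0"
  proof
    assume "(2::'k) = 0"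
    then have "CHAR('k) = 2"
      by (intro CHAR_eq_posI) (auto simp: less_2_cases_iff)
    with assms(1) show False ..
  qed
  show "(3::'k) \<noteq> 0"
  proof
    assume "(3::'k) = 0"
    then have "CHAR('k) = 3"
      using two by (intro CHAR_eq_posI) (auto simp: numeral_3_eq_3 less_Suc_eq)
    with assms(2) show False ..
  qed
qed

locale lie_alg =
  fixes scale :: "'k::field \<Rightarrow> 'a::ab_group_add \<Rightarrow> 'a"
    and br :: "'a \<Rightarrow> 'a \<Rightarrow> 'a"
  assumes lie_algebra: "lie_algebra scale br"
begin

lemma br_add_left: "br (x + y) z = br x z + br y z"
  and br_add_right: "br x (y + z) = br x y + br x z"
  and br_scale_right: "br x (scale c y) = scale c (br x y)"
  and br_self: "br x x = 0"
  and jacobi: "br x (br y z) + br y (br z x) + br z (br x y) = 0"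
  using lie_algebra by (simp_all add: lie_algebra_def)

lemma additive_br_left: "additive (\<lambda>x. br x z)"
  by unfold_locales (rule br_add_left)

lemma additive_br_right: "additive (br x)"
  by unfold_locales (rule br_add_right)

lemma br_minus_left: "br (- x) z = - br x z"
  and br_diff_left: "br (x - y) z = br x z - br y z"
  using additive.minus[OF additive_br_left] additive.diff[OF additive_br_left] by simp_all

lemma br_minus_right: "br z (- x) = - br z x"
  and br_diff_right: "br z (x - y) = br z x - br z y"
  using additive.minus[OF additive_br_right] additive.diff[OF additive_br_right] by simp_all

lemma br_anticomm: "br x y = - br y x"
proof -
  have "0 = br (x + y) (x + y)"
    by (simp add: br_self)
  also have "\<dots> = br x x + br y x + (br x y + br y y)"
    by (simp only: br_add_left[of x y] br_add_right)
  also have "\<dots> = br x y + br y x"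
    by (simp add: br_self add.commute)
  finally show ?thesis
    by (simp add: eq_neg_iff_add_eq_0)
qed

lemma br_derivation: "br a (br u v) = br (br a u) v + br u (br a v)"
  using jacobi[of a u v] br_anticomm[of u a] br_anticomm[of v "br a u"] br_anticomm[of "br v a" u]
    br_anticomm[of v a] br_minus_left br_minus_right
  by (simp add: algebra_simps eq_neg_iff_add_eq_0)

lemma br_br_right: "br u (br v w) = br (br u v) w - br (br u w) v"
  using br_derivation[of u v w] br_anticomm[of v "br u w"] by simp

lemma additive_fold_br: "additive (fold br as)"
proof
  show "fold br as (x + y) = fold br as x + fold br as y" for x y
    by (induction as arbitrary: x y) (simp_all add: br_add_right)
qed

lemma fold_br_scale: "fold br as (scale c x) = scale c (fold br as x)"
  by (induction as arbitrary: x) (simp_all add: br_scale_right)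

definition kernel_ideal :: "('a \<Rightarrow> 'a \<Rightarrow> 'k) \<Rightarrow> 'a set" where
  "kernel_ideal \<phi> = {w. \<forall>as z. \<phi> (fold br as w) z = 0}"

lemma lie_ideal_kernel_ideal:
  assumes "bilinear_form scale \<phi>"
  shows "lie_ideal scale br (kernel_ideal \<phi>)"
proof -
  have phi_additive: "additive (\<lambda>x. \<phi> x z)" for z
    using assms by unfold_locales (simp add: bilinear_form_def)
  have phi_scale: "\<phi> (scale c x) z = c * \<phi> x z" for c x z
    using assms by (simp add: bilinear_form_def)
  have "br x w \<in> kernel_ideal \<phi>" if "w \<in> kernel_ideal \<phi>" for x w
  proof -
    have "\<phi> (fold br (x # as) w) z = 0" for as z
      using that by (simp add: kernel_ideal_def del: fold_Cons)
    then show ?thesis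
      by (simp add: kernel_ideal_def)
  qed
  then show ?thesis
    unfolding lie_ideal_def kernel_ideal_def
    by (simp add: additive.add[OF additive_fold_br] additive.zero[OF additive_fold_br]
        additive.add[OF phi_additive] additive.zero[OF phi_additive] fold_br_scale phi_scale)
qed

lemma kernel_ideal_neq_UNIV:
  assumes "\<phi> x y \<noteq> 0"
  shows "kernel_ideal \<phi> \<noteq> UNIV"
proof -
  have "\<phi> (fold br [] x) y \<noteq> 0"
    using assms by simp
  then have "x \<notin> kernel_ideal \<phi>"
    unfolding kernel_ideal_def by blast
  then show ?thesis
    by blast
qed

definition std_poly5 :: "'a \<Rightarrow> 'a \<Rightarrow> 'a \<Rightarrow> 'a \<Rightarrow> 'a \<Rightarrow> 'a" where
  "std_poly5 y a b c d =
     br (br (br (br y a) b) c) d - br (br (br (br y a) b) d) c - br (br (br (br y a) c) b) d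
    + br (br (br (br y a) c) d) b + br (br (br (br y a) d) b) c - br (br (br (br y a) d) c) b
    - br (br (br (br y b) a) c) d + br (br (br (br y b) a) d) c + br (br (br (br y b) c) a) d
    - br (br (br (br y b) c) d) a - br (br (br (br y b) d) a) c + br (br (br (br y b) d) c) a
    + br (br (br (br y c) a) b) d - br (br (br (br y c) a) d) b - br (br (br (br y c) b) a) d
    + br (br (br (br y c) b) d) a + br (br (br (br y c) d) a) b - br (br (br (br y c) d) b) a
    - br (br (br (br y d) a) b) c + br (br (br (br y d) a) c) b + br (br (br (br y d) b) a) c
    - br (br (br (br y d) b) c) a - br (br (br (br y d) c) a) b + br (br (br (br y d) c) b) a"

lemma std5_eq_std_poly5: "std5 scale br y x = std_poly5 y (x 1) (x 2) (x 3) (x 4)"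
proof -
  interpret module scale
    using lie_algebra by (simp add: lie_algebra_def vector_space_def module_def)
  have "{1..4::nat} = {1, 2, 3, 4}"
    by auto
  moreover have "{p. p permutes ({}::nat set)} = {id}"
    by auto
  ultimately show ?thesis
    unfolding std5_def std_poly5_def
    by (simp add: sum_over_permutations_insert sign_compose permutation_compose
        permutation_swap_id sign_swap_id algebra_simps)
qed

lemma br_std_poly5:
  "br e (std_poly5 y a b c d) = std_poly5 (br e y) a b c d + std_poly5 y (br e a) b c d
     + std_poly5 y a (br e b) c d + std_poly5 y a b (br e c) d + std_poly5 y a b c (br e d)"
  unfolding std_poly5_def
  by (simp add: br_derivation[of e] br_add_left br_add_right br_diff_left br_diff_right
      br_minus_left br_minus_right algebra_simps)

lemma br_std5:
  "br e (std5 scale br y x) = std5 scale br (br e y) x + (\<Sum>i\<in>{1..4}. std5 scale br y (x(i := br e (x i))))"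
  by (simp add: std5_eq_std_poly5 br_std_poly5 numeral_eq_Suc add.assoc)

end

locale comm_cocycle = lie_alg scale br
  for scale :: "'k::field \<Rightarrow> 'a::ab_group_add \<Rightarrow> 'a" and br +
  fixes \<phi> :: "'a \<Rightarrow> 'a \<Rightarrow> 'k"
  assumes comm_2_cocycle: "comm_2_cocycle scale br \<phi>"
begin

lemma bilinear_form: "bilinear_form scale \<phi>"
  using comm_2_cocycle by (simp add: comm_2_cocycle_def)

lemma phi_add_left: "\<phi> (x + y) z = \<phi> x z + \<phi> y z"
  and phi_add_right: "\<phi> x (y + z) = \<phi> x y + \<phi> x z"
  and phi_commute: "\<phi> x y = \<phi> y x"
  and cocycle: "\<phi> (br x y) z + \<phi> (br z x) y + \<phi> (br y z) x = 0"
  using comm_2_cocycle unfolding comm_2_cocycle_def bilinear_form_def by blast+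

lemma additive_phi_left: "additive (\<lambda>x. \<phi> x z)"
  by unfold_locales (rule phi_add_left)

lemma additive_phi_right: "additive (\<phi> x)"
  by unfold_locales (rule phi_add_right)

lemma phi_minus_left: "\<phi> (- x) z = - \<phi> x z"
  and phi_diff_left: "\<phi> (x - y) z = \<phi> x z - \<phi> y z"
  using additive.minus[OF additive_phi_left] additive.diff[OF additive_phi_left] by simp_all

lemma phi_minus_right: "\<phi> z (- x) = - \<phi> z x"
  and phi_diff_right: "\<phi> z (x - y) = \<phi> z x - \<phi> z y"
  using additive.minus[OF additive_phi_right] additive.diff[OF additive_phi_right] by simp_all

lemma phi_br_left: "\<phi> (br p q) s = \<phi> p (br s q) - \<phi> q (br s p)"
proof -
  have "\<phi> (br p q) s = - \<phi> (br s p) q - \<phi> (br q s) p"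
    using cocycle[of p q s] by (simp add: eq_neg_iff_add_eq_0 algebra_simps)
  also have "\<dots> = \<phi> p (br s q) - \<phi> q (br s p)"
    using br_anticomm[of q s] phi_minus_right phi_commute[of _ p] phi_commute[of _ q] by simp
  finally show ?thesis .
qed

lemmas normalize = phi_br_left br_br_right br_add_left br_add_right br_minus_left br_minus_right
  br_diff_left br_diff_right phi_add_left phi_add_right phi_minus_left phi_minus_right
  phi_diff_left phi_diff_right

definition jacobi_sum :: "'a \<Rightarrow> 'a \<Rightarrow> 'a \<Rightarrow> 'a \<Rightarrow> 'k" where
  "jacobi_sum t x y w = \<phi> x (br t (br y w)) + \<phi> y (br t (br w x)) + \<phi> w (br t (br x y))"

lemma double_jacobi_sum: "2 * jacobi_sum t x y w = 0"
proof -
  have "br (br x y) w + br (br y w) x + br (br w x) y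
      = - (br x (br y w) + br y (br w x) + br w (br x y))"
    by (simp only: br_anticomm[of "br x y" w] br_anticomm[of "br y w" x] br_anticomm[of "br w x" y])
      (simp add: algebra_simps)
  also have "\<dots> = 0"
    by (simp add: jacobi)
  finally have "br (br x y) w + br (br y w) x + br (br w x) y = 0" .
  then have "\<phi> (br (br x y) w) t + \<phi> (br (br y w) x) t + \<phi> (br (br w x) y) t = 0"
    by (metis additive.zero[OF additive_phi_left] phi_add_left)
  then show ?thesis
    unfolding jacobi_sum_def by (simp add: normalize algebra_simps)
qed

lemma jacobi_sum_eq_0:
  assumes "(2::'k) \<noteq> 0"
  shows "jacobi_sum t x y w = 0"
  using double_jacobi_sum[of t x y w] assms by simp

text \<open>The coefficients were computed by linear algebra on multilinear Lie monomials; the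
  identity itself is checked by rewriting both sides to a normal form.\<close>

lemma triple_phi_std_poly5:
  "3 * \<phi> z (std_poly5 y a b c d) =
      - 4 * jacobi_sum y (br (br a b) z) c d - 2 * jacobi_sum y (br (br a c) d) b z
      + 2 * jacobi_sum y (br (br a c) z) b d + 2 * jacobi_sum y (br (br a d) c) b z
      - 2 * jacobi_sum y (br (br a d) z) b c + 2 * jacobi_sum y (br (br a z) c) b d
      - 2 * jacobi_sum y (br (br a z) d) b c + 2 * jacobi_sum y (br a b) (br c d) z
      + 2 * jacobi_sum y (br a c) (br b z) d - 2 * jacobi_sum y (br a d) (br b z) c
      + 2 * jacobi_sum y (br a z) (br b c) d - 2 * jacobi_sum y (br a z) (br b d) c
      - 2 * jacobi_sum y a (br (br b c) d) z + 2 * jacobi_sum y a (br (br b c) z) d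
      + 2 * jacobi_sum y a (br (br b d) c) z - 2 * jacobi_sum y a (br (br b d) z) c
      + 2 * jacobi_sum y a (br (br b z) c) d - 2 * jacobi_sum y a (br (br b z) d) c
      + jacobi_sum (br y a) (br b c) d z - jacobi_sum (br y a) (br b d) c z
      - 2 * jacobi_sum (br y a) (br b z) c d + jacobi_sum (br y a) b (br c d) z
      - jacobi_sum (br y b) (br a c) d z + jacobi_sum (br y b) (br a d) c z
      + 2 * jacobi_sum (br y b) (br a z) c d - jacobi_sum (br y b) a (br c d) z
      + jacobi_sum (br y c) (br a b) d z - jacobi_sum (br y c) (br a d) b z
      - 2 * jacobi_sum (br y c) (br a z) b d - jacobi_sum (br y c) a (br b d) z
      - 2 * jacobi_sum (br y c) a (br b z) d - jacobi_sum (br y d) (br a b) c z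
      + jacobi_sum (br y d) (br a c) b z + 2 * jacobi_sum (br y d) (br a z) b c
      + jacobi_sum (br y d) a (br b c) z + 2 * jacobi_sum (br y d) a (br b z) c
      + 2 * jacobi_sum (br y z) (br a b) c d - 2 * jacobi_sum (br y z) (br a c) b d
      + 2 * jacobi_sum (br y z) (br a d) b c - 2 * jacobi_sum (br y z) a (br b c) d
      + 2 * jacobi_sum (br y z) a (br b d) c + jacobi_sum (br (br y a) b) c d z
      - jacobi_sum (br (br y a) c) b d z + jacobi_sum (br (br y a) d) b c z
      + 2 * jacobi_sum (br (br y a) z) b c d - jacobi_sum (br (br y b) a) c d z
      + jacobi_sum (br (br y b) c) a d z - jacobi_sum (br (br y b) d) a c z
      - 2 * jacobi_sum (br (br y b) z) a c d + jacobi_sum (br (br y c) a) b d z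
      - jacobi_sum (br (br y c) b) a d z - jacobi_sum (br (br y c) d) a b z
      - jacobi_sum (br (br y d) a) b c z + jacobi_sum (br (br y d) b) a c z
      + jacobi_sum (br (br y d) c) a b z - 2 * jacobi_sum (br (br y z) a) b c d
      + 2 * jacobi_sum (br (br y z) b) a c d"
  unfolding std_poly5_def jacobi_sum_def by (simp add: normalize algebra_simps)

lemma phi_std_poly5_eq_0:
  assumes "(2::'k) \<noteq> 0" and "(3::'k) \<noteq> 0"
  shows "\<phi> (std_poly5 y a b c d) z = 0"
  using triple_phi_std_poly5[of z y a b c d] assms
  by (simp add: phi_commute[of _ z] jacobi_sum_eq_0)

lemma std5_mem_kernel_ideal:
  assumes "(2::'k) \<noteq> 0" and "(3::'k) \<noteq> 0"
  shows "std5 scale br y x \<in> kernel_ideal \<phi>"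
proof -
  have "\<phi> (fold br as (std5 scale br y x)) z = 0" for as z
  proof (induction as arbitrary: y x)
    case Nil
    show ?case
      by (simp add: std5_eq_std_poly5 phi_std_poly5_eq_0 assms)
  next
    case (Cons e as)
    then show ?case
      by (simp add: br_std5 additive.add[OF additive_fold_br] additive.sum[OF additive_fold_br]
          phi_add_left additive.sum[OF additive_phi_left])
  qed
  then show ?thesis
    by (simp add: kernel_ideal_def)
qed

end

theorem lemma2p1:
  fixes scale :: "'k::field \<Rightarrow> 'a::ab_group_add \<Rightarrow> 'a"
    and br :: "'a \<Rightarrow> 'a \<Rightarrow> 'a"
  assumes "lie_algebra scale br"
    and "CHAR('k) \<noteq> 2" and "CHAR('k) \<noteq> 3"
    and "\<exists>\<phi>. comm_2_cocycle scale br \<phi> \<and> (\<exists>x y. \<phi> x y \<noteq> 0)"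
  shows "\<exists>I. lie_ideal scale br I \<and> I \<noteq> UNIV \<and> quotient_satisfies_std5 scale br I"
proof -
  obtain \<phi> x y where "comm_2_cocycle scale br \<phi>" and "\<phi> x y \<noteq> 0"
    using assms(4) by blast
  then interpret comm_cocycle scale br \<phi>
    using assms(1) by (simp add: comm_cocycle_def lie_alg_def comm_cocycle_axioms_def)
  have "quotient_satisfies_std5 scale br (kernel_ideal \<phi>)"
    using two_and_three_neq_zero[OF assms(2,3)]
    by (simp add: quotient_satisfies_std5_def std5_mem_kernel_ideal)
  then show ?thesis
    using lie_ideal_kernel_ideal[OF bilinear_form] kernel_ideal_neq_UNIV[of \<phi> x y] \<open>\<phi> x y \<noteq> 0\<close>
    by blast
qed

end
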